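(* Let $w$ be a 2D-weight and $\mathfrak{K}_w$ the 2D-GWN operator associated with $w$. Then for all $k\ge0$, as operators on $\mathcal{S}^*(M)$, $$\mathfrak{K}_w\mathfrak{a}_k^\dagger=\mathfrak{a}_k^\dagger\mathfrak{K}_w-\mathfrak{a}_k^\dagger\mathfrak{N}_{w(k,\cdot)}-\mathfrak{a}_k^\dagger\mathfrak{N}_{w(\cdot,k)}+\Big[\sum_{j=0}^\infty w(j,k)\Big]\mathfrak{a}_k^\dagger,$$ where $\mathfrak{N}_{w(k,\cdot)}$ and $\mathfrak{N}_{w(\cdot,k)}$ are the 1D-GWN operators associated with the bounded nonnegative functions $n\mapsto w(k,n)$ and $j\mapsto w(j,k)$ on $\mathbb{N}$.
   Context: Setting: $M$ a discrete-time normal martingale with the chaotic representation property; $Z_0=M_0$, $Z_n=M_n-M_{n-1}$; $\Gamma$ the finite subsets of $\mathbb{N}$, $Z_\emptyset=1$, $Z_\sigma=\prod_{j\in\sigma}Z_j$, an orthonormal basis of $\mathcal{L}^2(M)$. $\lambda_\emptyset=1$, $\lambda_\sigma=\prod_{k\in\sigma}(k+1)$; $\mathcal{S}(M)=\{\xi\in\mathcal{L}^2(M):\sum_\sigma\lambda_\sigma^{2p}|\langle Z_\sigma,\xi\rangle|^2<\infty\ \forall p\ge0\}$, $\mathcal{S}^*(M)$ its dual with the strong topology. Fock transform $\widehat\Phi(\sigma)=\Phi(Z_\sigma)$ (determines $\Phi$); $\mathbf{1}_\sigma$ is the indicator of $\sigma$. A 2D-weight is a nonnegative $w$ on $\mathbb{N}^2$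 with $\sup_k\sum_jw(j,k)<\infty$ (hence $w$ is bounded); spectral function $\vartheta_w(\sigma)=\sum_j\mathbf{1}_\sigma(j)w(j,j)+\sum_{j,k}(1-\mathbf{1}_\sigma(j))\mathbf{1}_\sigma(k)w(j,k)$. The 2D-GWN operator $\mathfrak{K}_w$ is the unique continuous linear operator on $\mathcal{S}^*(M)$ with $\widehat{\mathfrak{K}_w\Phi}(\sigma)=\vartheta_w(\sigma)\widehat\Phi(\sigma)$. For a bounded nonnegative $u$ on $\mathbb{N}$, the 1D-GWN operator $\mathfrak{N}_u$ is the unique continuous linear operator on $\mathcal{S}^*(M)$ with $\widehat{\mathfrak{N}_u\Phi}(\sigma)=\#_u(\sigma)\widehat\Phi(\sigma)$, $\#_u(\sigma)=\sum_k\mathbf{1}_\sigma(k)u(k)$. For $k\ge0$, $\mathfrak{a}_k,\mathfrak{a}_k^\dagger$ are the continuous linear operators on $\mathcal{S}^*(M)$ determined by $\widehat{\mathfrak{a}_k\Phi}(\sigma)=(1-\mathbf{1}_\sigma(k))\widehat\Phi(\sigma\cup\{k\})$ and $\widehat{\mathfrak{a}_k^\dagger\Phi}(\sigma)=\mathbf{1}_\sigma(k)\widehat\Phi(\sigma\setminus\{k\})$. *)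

theory Defs
  imports Complex_Main "HOL-Library.FSet"
begin

text \<open>Generalized functionals in S*(M) are represented through their Fock transforms
  (functions on the finite subsets Gamma of nat), which determine them uniquely.
  A function on Gamma is the Fock transform of an element of S*(M) iff it is
  polynomially bounded in lambda.\<close>

type_synonym fock = "nat fset \<Rightarrow> complex"

definition lam :: "nat fset \<Rightarrow> real" where
  "lam \<sigma> = (\<Prod>k\<in>fset \<sigma>. real k + 1)"

definition Sstar :: "fock set" where
  "Sstar = {F. \<exists>C (p::nat). \<forall>\<sigma>. norm (F \<sigma>) \<le> C * lam \<sigma> ^ p}"

definition ind :: "nat fset \<Rightarrow> nat \<Rightarrow> real" where
  "ind \<sigma> j = (if j |\<in>| \<sigma> then 1 else 0)"

definition weight2D :: "(nat \<Rightarrow> nat \<Rightarrow> real) \<Rightarrow> bool" where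
  "weight2D w \<longleftrightarrow> (\<forall>j k. 0 \<le> w j k) \<and>
     (\<exists>C. \<forall>k. summable (\<lambda>j. w j k) \<and> (\<Sum>j. w j k) \<le> C)"

definition spec2D :: "(nat \<Rightarrow> nat \<Rightarrow> real) \<Rightarrow> nat fset \<Rightarrow> real" where
  "spec2D w \<sigma> = (\<Sum>j\<in>fset \<sigma>. w j j)
     + (\<Sum>k\<in>fset \<sigma>. \<Sum>j. (1 - ind \<sigma> j) * ind \<sigma> k * w j k)"

definition num_u :: "(nat \<Rightarrow> real) \<Rightarrow> nat fset \<Rightarrow> real" where
  "num_u u \<sigma> = (\<Sum>k\<in>fset \<sigma>. u k)"

definition K2 :: "(nat \<Rightarrow> nat \<Rightarrow> real) \<Rightarrow> fock \<Rightarrow> fock" where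
  "K2 w F = (\<lambda>\<sigma>. complex_of_real (spec2D w \<sigma>) * F \<sigma>)"

definition N1 :: "(nat \<Rightarrow> real) \<Rightarrow> fock \<Rightarrow> fock" where
  "N1 u F = (\<lambda>\<sigma>. complex_of_real (num_u u \<sigma>) * F \<sigma>)"

definition ann :: "nat \<Rightarrow> fock \<Rightarrow> fock" where
  "ann k F = (\<lambda>\<sigma>. complex_of_real (1 - ind \<sigma> k) * F (finsert k \<sigma>))"

definition cre :: "nat \<Rightarrow> fock \<Rightarrow> fock" where
  "cre k F = (\<lambda>\<sigma>. complex_of_real (ind \<sigma> k) * F (\<sigma> |-| {|k|}))"

end

theory Submission
  imports Defs
begin

text \<open>In Fock transforms both sides vanish at \<sigma> unless k \<in> \<sigma>, and for \<sigma> = \<tau> \<union> {k} with k \<notin> \<tau>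
  everything reduces to a recursion for the spectral function: adding k to \<tau> contributes the
  diagonal term w(k,k) and the part of column k outside \<tau> \<union> {k}, and removes the entries
  w(k,n), n \<in> \<tau>, from the columns of \<tau>. Writing each column sum over the complement as the
  full column sum minus a finite sum makes this
  \<vartheta>(\<tau> \<union> {k}) = \<vartheta>(\<tau>) - (sum over n \<in> \<tau> of w(k,n)) - (sum over j \<in> \<tau> of w(j,k))
  + (sum over all j of w(j,k)).\<close>


lemma suminf_compl_fset:
  fixes f :: "nat \<Rightarrow> real"
  assumes "summable f"
  shows "(\<Sum>j. (1 - ind \<sigma> j) * f j) = (\<Sum>j. f j) - (\<Sum>j\<in>fset \<sigma>. f j)"
proof -
  have "(\<lambda>j. if j \<in> fset \<sigma> then f j else 0) sums (\<Sum>j\<in>fset \<sigma>. f j)"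
    by (rule sums_If_finite_set) simp
  with summable_sums[OF assms]
  have "(\<lambda>j. f j - (if j \<in> fset \<sigma> then f j else 0)) sums ((\<Sum>j. f j) - (\<Sum>j\<in>fset \<sigma>. f j))"
    by (rule sums_diff)
  moreover have "(\<lambda>j. f j - (if j \<in> fset \<sigma> then f j else 0)) = (\<lambda>j. (1 - ind \<sigma> j) * f j)"
    by (auto simp: ind_def)
  ultimately show ?thesis
    by (simp add: sums_iff)
qed

lemma spec2D_eq_column_sums:
  assumes "\<And>m. summable (\<lambda>j. w j m)"
  shows "spec2D w \<sigma> = (\<Sum>j\<in>fset \<sigma>. w j j)
           + (\<Sum>m\<in>fset \<sigma>. (\<Sum>j. w j m) - (\<Sum>j\<in>fset \<sigma>. w j m))"
proof -
  have "(\<Sum>j. (1 - ind \<sigma> j) * ind \<sigma> m * w j m) = (\<Sum>j. w j m) - (\<Sum>j\<in>fset \<sigma>. w j m)"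
    if "m \<in> fset \<sigma>" for m
    using that suminf_compl_fset[OF assms, of \<sigma> m] by (simp add: ind_def)
  then show ?thesis
    unfolding spec2D_def by simp
qed

lemma spec2D_finsert:
  assumes "\<And>m. summable (\<lambda>j. w j m)" and "k |\<notin>| \<tau>"
  shows "spec2D w (finsert k \<tau>) =
           spec2D w \<tau> - num_u (\<lambda>n. w k n) \<tau> - num_u (\<lambda>j. w j k) \<tau> + (\<Sum>j. w j k)"
  using assms(2)
  by (simp add: spec2D_eq_column_sums[OF assms(1)] num_u_def sum.distrib sum_subtractf
      algebra_simps)

text \<open>The identity holds pointwise for every Fock transform.\<close>

theorem theorem3p16:
  fixes w :: "nat \<Rightarrow> nat \<Rightarrow> real" and k :: nat and \<Phi> :: fock
  assumes "weight2D w" and "\<Phi> \<in> Sstar"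
  shows "K2 w (cre k \<Phi>) =
    (\<lambda>\<sigma>. cre k (K2 w \<Phi>) \<sigma> - cre k (N1 (\<lambda>n. w k n) \<Phi>) \<sigma>
          - cre k (N1 (\<lambda>j. w j k) \<Phi>) \<sigma>
          + complex_of_real (\<Sum>j. w j k) * cre k \<Phi> \<sigma>)"
proof
  fix \<sigma>
  have columns: "\<And>m. summable (\<lambda>j. w j m)"
    using assms(1) by (auto simp: weight2D_def)
  show "K2 w (cre k \<Phi>) \<sigma> = cre k (K2 w \<Phi>) \<sigma> - cre k (N1 (\<lambda>n. w k n) \<Phi>) \<sigma>
          - cre k (N1 (\<lambda>j. w j k) \<Phi>) \<sigma> + complex_of_real (\<Sum>j. w j k) * cre k \<Phi> \<sigma>"
  proof (cases "k |\<in>| \<sigma>")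
    case False
    then show ?thesis
      by (simp add: K2_def cre_def ind_def)
  next
    case True
    define \<tau> where "\<tau> = \<sigma> |-| {|k|}"
    have "\<sigma> = finsert k \<tau>"
      using True by (auto simp: \<tau>_def)
    then have spec: "spec2D w \<sigma> =
        spec2D w \<tau> - num_u (\<lambda>n. w k n) \<tau> - num_u (\<lambda>j. w j k) \<tau> + (\<Sum>j. w j k)"
      using spec2D_finsert[OF columns, of k \<tau>] by (simp add: \<tau>_def)
    show ?thesis
      using True by (simp add: K2_def cre_def N1_def ind_def spec \<tau>_def[symmetric] algebra_simps)
  qed
qed

end
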